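(* Let $n\ge 0$, let $T$ be a triangulation of a regular polygon with $n+3$ vertices, let $\alpha,\alpha'$ be positive roots and write $S=\operatorname{Supp}\alpha$, $S'=\operatorname{Supp}\alpha'$. Then $\operatorname{Hom}_{\operatorname{Mod}{Q}_T}((M^\alpha,f^\alpha),(M^{\alpha'},f^{\alpha'}))\neq 0$ if and only if the following hold: (i) $S\cap S'\neq\emptyset$; (ii) there is no arrow in ${Q}_T$ from a vertex of $S\setminus S'$ to a vertex of $S\cap S'$; (iii) there is no arrow in ${Q}_T$ from a vertex of $S\cap S'$ to a vertex of $S'\setminus S$. In this case this Hom space is one-dimensional.
   Context: Diagonals of the polygon are called roots; those in $T$ are negative roots, indexed by a set $I$ (the one indexed by $i$ written $-\alpha_i$), and the others positive roots. $\operatorname{Supp}\alpha$ is the set of $i\in I$ with $-\alpha_i$ crossing $\alpha$. If $-\alpha_i,-\alpha_j$ bound a common triangle of $T$ with common vertex $x$, set $-\alpha_i<-\alpha_j$ if the minimal-angle rotation about $x$ sending the line through $-\alpha_i$ to that through $-\alpha_j$ is counterclockwise. ${Q}_T$ has vertex set $I$ and an arrow $j\to i$ whenever $-\alpha_i,-\alpha_j$ bound a common triangle and $-\alpha_i<-\alpha_j$. $\operatorname{Mod}{Q}_T$ is the category of finite-dimensional complex representations of ${Q}_T$ in which the composition of any two successive arrows in a triangle of ${Q}_T$ is zero. For a positive root $\alpha$, $(M^\alpha,f^\alpha)$ is the representation with $M^\alpha_i=\mathbb{C}$ for $i\in\operatorname{Supp}\alpha$, $M^\alpha_i=0$ otherwise,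 and $f^\alpha_{ij}=\mathrm{id}_{\mathbb{C}}$ on arrows between vertices of $\operatorname{Supp}\alpha$, $0$ otherwise. *)

theory Defs
  imports "Jordan_Normal_Form.Matrix"
begin

section \<open>Polygon with N vertices 0,...,N-1 labelled counterclockwise\<close>

definition poly_edge :: "nat \<Rightarrow> nat set \<Rightarrow> bool" where
  "poly_edge N e \<longleftrightarrow> (\<exists>a b. e = {a, b} \<and> a < b \<and> b < N \<and> (b = a + 1 \<or> (a = 0 \<and> b = N - 1)))"

text \<open>Diagonals (= roots): segments between two non-adjacent vertices.\<close>
definition is_diag :: "nat \<Rightarrow> nat set \<Rightarrow> bool" where
  "is_diag N d \<longleftrightarrow> (\<exists>a b. d = {a, b} \<and> a + 2 \<le> b \<and> b < N \<and> \<not> (a = 0 \<and> b = N - 1))"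

text \<open>Two diagonals cross (in the interior of the polygon) iff their endpoints strictly interleave.\<close>
definition crosses :: "nat set \<Rightarrow> nat set \<Rightarrow> bool" where
  "crosses d e \<longleftrightarrow> (\<exists>a b c c'. d = {a, b} \<and> e = {c, c'} \<and> a < c \<and> c < b \<and> (c' < a \<or> b < c'))"

definition triangulation :: "nat \<Rightarrow> nat set set \<Rightarrow> bool" where
  "triangulation N T \<longleftrightarrow>
     (\<forall>d\<in>T. is_diag N d) \<and>
     (\<forall>d\<in>T. \<forall>e\<in>T. \<not> crosses d e) \<and>
     (\<forall>d. is_diag N d \<and> d \<notin> T \<longrightarrow> (\<exists>e\<in>T. crosses d e))"

text \<open>Negative roots are the diagonals in T (indexed by I = T itself); positive roots are the
  other diagonals.\<close>
definition positive_root :: "nat \<Rightarrow> nat set set \<Rightarrow> nat set \<Rightarrow> bool" where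
  "positive_root N T \<alpha> \<longleftrightarrow> is_diag N \<alpha> \<and> \<alpha> \<notin> T"

definition Supp :: "nat set set \<Rightarrow> nat set \<Rightarrow> nat set set" where
  "Supp T \<alpha> = {i \<in> T. crosses i \<alpha>}"

text \<open>Arrow j \<rightarrow> i of Q_T: the diagonals i = {x,y} and j = {x,z} of T bound a common triangle
  {x,y,z} of T (third side {y,z} a polygon side or in T), and -alpha_i < -alpha_j, i.e. the
  rotation about x taking the ray x-y to the ray x-z (through the angle of the triangle) is
  counterclockwise, i.e. z comes after y in counterclockwise order seen from x.\<close>
definition arrow :: "nat \<Rightarrow> nat set set \<Rightarrow> nat set \<Rightarrow> nat set \<Rightarrow> bool" where
  "arrow N T j i \<longleftrightarrow> i \<in> T \<and> j \<in> T \<and>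
     (\<exists>x y z. i = {x, y} \<and> j = {x, z} \<and> y \<noteq> z \<and>
        ({y, z} \<in> T \<or> poly_edge N {y, z}) \<and>
        (y + N - x) mod N < (z + N - x) mod N)"

text \<open>A representation is given by a dimension vector d (M_i = C^(d i)) and, for each arrow
  j \<rightarrow> i, a matrix f j i of size d i \<times> d j.  A morphism (M,f) \<rightarrow> (M',g) is a family of
  matrices phi i of size d' i \<times> d i (i \<in> I, extended by a dummy value outside I) with
  g_a phi_j = phi_i f_a for each arrow a : j \<rightarrow> i.\<close>
definition rep_Hom ::
  "'v set \<Rightarrow> ('v \<Rightarrow> 'v \<Rightarrow> bool) \<Rightarrow> ('v \<Rightarrow> nat) \<Rightarrow> ('v \<Rightarrow> 'v \<Rightarrow> complex mat)
     \<Rightarrow> ('v \<Rightarrow> nat) \<Rightarrow> ('v \<Rightarrow> 'v \<Rightarrow> complex mat) \<Rightarrow> ('v \<Rightarrow> complex mat) set" where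
  "rep_Hom I Q d f d' g =
     {\<phi>. (\<forall>i\<in>I. \<phi> i \<in> carrier_mat (d' i) (d i)) \<and> (\<forall>i. i \<notin> I \<longrightarrow> \<phi> i = 0\<^sub>m 0 0) \<and>
          (\<forall>i\<in>I. \<forall>j\<in>I. Q j i \<longrightarrow> g j i * \<phi> j = \<phi> i * f j i)}"

definition rep_Hom_zero :: "'v set \<Rightarrow> ('v \<Rightarrow> nat) \<Rightarrow> ('v \<Rightarrow> nat) \<Rightarrow> 'v \<Rightarrow> complex mat" where
  "rep_Hom_zero I d d' = (\<lambda>i. if i \<in> I then 0\<^sub>m (d' i) (d i) else 0\<^sub>m 0 0)"

definition one_dimensional :: "('v \<Rightarrow> complex mat) set \<Rightarrow> ('v \<Rightarrow> complex mat) \<Rightarrow> bool" where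
  "one_dimensional H z \<longleftrightarrow> (\<exists>\<psi>\<in>H. \<psi> \<noteq> z \<and> H = {(\<lambda>i. c \<cdot>\<^sub>m \<psi> i) | c. True})"

definition M_dim :: "nat set set \<Rightarrow> nat set \<Rightarrow> nat set \<Rightarrow> nat" where
  "M_dim T \<alpha> i = (if i \<in> Supp T \<alpha> then 1 else 0)"

definition M_map :: "nat set set \<Rightarrow> nat set \<Rightarrow> nat set \<Rightarrow> nat set \<Rightarrow> complex mat" where
  "M_map T \<alpha> j i = (if j \<in> Supp T \<alpha> \<and> i \<in> Supp T \<alpha> then 1\<^sub>m 1
                     else 0\<^sub>m (M_dim T \<alpha> i) (M_dim T \<alpha> j))"

definition HomM :: "nat \<Rightarrow> nat set set \<Rightarrow> nat set \<Rightarrow> nat set \<Rightarrow> (nat set \<Rightarrow> complex mat) set" where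
  "HomM N T \<alpha> \<alpha>' = rep_Hom T (arrow N T) (M_dim T \<alpha>) (M_map T \<alpha>) (M_dim T \<alpha>') (M_map T \<alpha>')"

definition HomM_zero :: "nat set set \<Rightarrow> nat set \<Rightarrow> nat set \<Rightarrow> nat set \<Rightarrow> complex mat" where
  "HomM_zero T \<alpha> \<alpha>' = rep_Hom_zero T (M_dim T \<alpha>) (M_dim T \<alpha>')"

end

theory Submission
  imports Defs
begin

(* A morphism M^alpha -> M^alpha' has 1x1 components on S \<inter> S' and, for dimension reasons,
  zero components elsewhere.  The commutation relation along an arrow inside S \<inter> S' identifies
  the two components, while an arrow from S - S' into S \<inter> S', or from S \<inter> S' into S' - S,
  forces the component at its end in S \<inter> S' to vanish.  So once S \<inter> S' is connected in Q_T,
  a morphism is a single scalar on S \<inter> S', and a nonzero scalar is possible exactly under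
  (i)-(iii).
  For connectedness, two diagonals of T crossing both alpha and alpha' are joined through
  triangles of T whose sides cross both as well: descend through the triangles below the outer
  one of two nested diagonals, or, for two diagonals side by side, through the triangles enclosing
  both until an apex separates them.  Two sides of a triangle of T are joined by an arrow in one
  direction or the other. *)

section \<open>Thin representations of a quiver\<close>

definition quiver_link :: "('v \<Rightarrow> 'v \<Rightarrow> bool) \<Rightarrow> 'v set \<Rightarrow> ('v \<times> 'v) set" where
  "quiver_link Q U = {(j, i). j \<in> U \<and> i \<in> U \<and> (Q j i \<or> Q i j)}"

definition quiver_connected :: "('v \<Rightarrow> 'v \<Rightarrow> bool) \<Rightarrow> 'v set \<Rightarrow> bool" where
  "quiver_connected Q U \<longleftrightarrow> U \<times> U \<subseteq> (quiver_link Q U)\<^sup>*"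

lemma quiver_link_rtrancl_sym:
  assumes "(x, y) \<in> (quiver_link Q U)\<^sup>*"
  shows "(y, x) \<in> (quiver_link Q U)\<^sup>*"
proof -
  have "sym (quiver_link Q U)" by (auto simp: sym_def quiver_link_def)
  then show ?thesis by (rule symD[OF sym_rtrancl assms])
qed

definition thin_dim :: "'v set \<Rightarrow> 'v \<Rightarrow> nat" where
  "thin_dim S i = (if i \<in> S then 1 else 0)"

definition thin_map :: "'v set \<Rightarrow> 'v \<Rightarrow> 'v \<Rightarrow> complex mat" where
  "thin_map S j i = (if j \<in> S \<and> i \<in> S then 1\<^sub>m 1 else 0\<^sub>m (thin_dim S i) (thin_dim S j))"

definition thin_hom :: "'v set \<Rightarrow> 'v set \<Rightarrow> 'v set \<Rightarrow> complex \<Rightarrow> 'v \<Rightarrow> complex mat" where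
  "thin_hom I S S' c i =
     (if i \<in> S \<inter> S' then c \<cdot>\<^sub>m 1\<^sub>m 1 else rep_Hom_zero I (thin_dim S) (thin_dim S') i)"

lemma thin_hom_smult: "thin_hom I S S' c = (\<lambda>i. c \<cdot>\<^sub>m thin_hom I S S' 1 i)"
  by (auto simp: fun_eq_iff thin_hom_def rep_Hom_zero_def)

lemma thin_hom_eq_zero_iff:
  assumes "S \<inter> S' \<subseteq> I"
  shows "thin_hom I S S' c = rep_Hom_zero I (thin_dim S) (thin_dim S') \<longleftrightarrow> c = 0 \<or> S \<inter> S' = {}"
proof
  assume zero: "thin_hom I S S' c = rep_Hom_zero I (thin_dim S) (thin_dim S')"
  show "c = 0 \<or> S \<inter> S' = {}"
  proof (rule ccontr)
    assume "\<not> (c = 0 \<or> S \<inter> S' = {})"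
    then obtain i where "i \<in> S \<inter> S'" "c \<noteq> 0" by blast
    then have "thin_hom I S S' c i $$ (0, 0) \<noteq> rep_Hom_zero I (thin_dim S) (thin_dim S') i $$ (0, 0)"
      using assms by (auto simp: thin_hom_def rep_Hom_zero_def thin_dim_def)
    with zero show False by simp
  qed
qed (use assms in \<open>auto simp: fun_eq_iff thin_hom_def rep_Hom_zero_def thin_dim_def\<close>)

lemma mult_empty_mat: "A \<in> carrier_mat n 0 \<Longrightarrow> B \<in> carrier_mat 0 m \<Longrightarrow> A * B = 0\<^sub>m n m"
  by (rule eq_matI) (auto simp: scalar_prod_def)

lemma thin_hom_square_iff:
  assumes "i \<in> I" "j \<in> I"
  shows "thin_map S' j i * thin_hom I S S' c j = thin_hom I S S' c i * thin_map S j i \<longleftrightarrow>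
           c = 0 \<or> \<not> (j \<in> S - S' \<and> i \<in> S \<inter> S') \<and> \<not> (j \<in> S \<inter> S' \<and> i \<in> S' - S)"
  using assms
  by (cases "i \<in> S"; cases "i \<in> S'"; cases "j \<in> S"; cases "j \<in> S'")
     (auto simp: thin_hom_def thin_map_def thin_dim_def rep_Hom_zero_def mult_empty_mat
       dest!: arg_cong[where f = "\<lambda>A. A $$ (0,0)"])

lemma thin_hom_mem_rep_Hom_iff:
  assumes "S \<subseteq> I" "S' \<subseteq> I"
  shows "thin_hom I S S' c \<in> rep_Hom I Q (thin_dim S) (thin_map S) (thin_dim S') (thin_map S') \<longleftrightarrow>
           c = 0 \<or> \<not> (\<exists>j\<in>S - S'. \<exists>i\<in>S \<inter> S'. Q j i) \<and> \<not> (\<exists>j\<in>S \<inter> S'. \<exists>i\<in>S' - S. Q j i)"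
proof -
  have "thin_hom I S S' c i \<in> carrier_mat (thin_dim S' i) (thin_dim S i)" if "i \<in> I" for i
    using that by (auto simp: thin_hom_def rep_Hom_zero_def thin_dim_def)
  moreover have "thin_hom I S S' c i = 0\<^sub>m 0 0" if "i \<notin> I" for i
    using that assms by (auto simp: thin_hom_def rep_Hom_zero_def)
  moreover have "(\<forall>i\<in>I. \<forall>j\<in>I. Q j i \<longrightarrow>
      thin_map S' j i * thin_hom I S S' c j = thin_hom I S S' c i * thin_map S j i) \<longleftrightarrow>
      c = 0 \<or> \<not> (\<exists>j\<in>S - S'. \<exists>i\<in>S \<inter> S'. Q j i) \<and> \<not> (\<exists>j\<in>S \<inter> S'. \<exists>i\<in>S' - S. Q j i)"
    using assms by (simp add: thin_hom_square_iff) blast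
  ultimately show ?thesis
    unfolding rep_Hom_def by blast
qed

lemma rep_Hom_thin_outside:
  assumes "\<phi> \<in> rep_Hom I Q (thin_dim S) (thin_map S) (thin_dim S') (thin_map S')" "i \<notin> S \<inter> S'"
  shows "\<phi> i = thin_hom I S S' c i"
proof (cases "i \<in> I")
  case True
  then have "\<phi> i \<in> carrier_mat (thin_dim S' i) (thin_dim S i)"
    using assms(1) by (simp add: rep_Hom_def)
  then show ?thesis
    using assms(2) True by (auto simp: thin_hom_def rep_Hom_zero_def thin_dim_def)
next
  case False
  then show ?thesis
    using assms by (auto simp: rep_Hom_def thin_hom_def rep_Hom_zero_def)
qed

lemma rep_Hom_thin_arrow_eq:
  assumes "\<phi> \<in> rep_Hom I Q (thin_dim S) (thin_map S) (thin_dim S') (thin_map S')"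
    and "S \<inter> S' \<subseteq> I" "j \<in> S \<inter> S'" "i \<in> S \<inter> S'" "Q j i"
  shows "\<phi> j = \<phi> i"
proof -
  have "j \<in> I" "i \<in> I" using assms(2-4) by auto
  then have "\<phi> j \<in> carrier_mat 1 1" "\<phi> i \<in> carrier_mat 1 1"
    using assms(1,3,4) by (auto simp: rep_Hom_def thin_dim_def)
  moreover have "thin_map S' j i * \<phi> j = \<phi> i * thin_map S j i"
    using assms(1,5) \<open>j \<in> I\<close> \<open>i \<in> I\<close> unfolding rep_Hom_def by blast
  then have "1\<^sub>m 1 * \<phi> j = \<phi> i * 1\<^sub>m 1"
    using assms(3,4) by (simp add: thin_map_def)
  ultimately show ?thesis by simp
qed

lemma rep_Hom_thin_const:
  assumes "\<phi> \<in> rep_Hom I Q (thin_dim S) (thin_map S) (thin_dim S') (thin_map S')"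
    and "S \<inter> S' \<subseteq> I" "quiver_connected Q (S \<inter> S')" "x \<in> S \<inter> S'" "y \<in> S \<inter> S'"
  shows "\<phi> x = \<phi> y"
proof -
  have "(x, y) \<in> (quiver_link Q (S \<inter> S'))\<^sup>*"
    using assms(3-5) by (auto simp: quiver_connected_def)
  then show ?thesis
  proof induction
    case (step y z)
    then show ?case
      using rep_Hom_thin_arrow_eq[OF assms(1,2), of y z] rep_Hom_thin_arrow_eq[OF assms(1,2), of z y]
      by (auto simp: quiver_link_def)
  qed simp
qed

lemma rep_Hom_thin_obtain_scalar:
  assumes "\<phi> \<in> rep_Hom I Q (thin_dim S) (thin_map S) (thin_dim S') (thin_map S')"
    and "S \<inter> S' \<subseteq> I" "quiver_connected Q (S \<inter> S')"
  obtains c where "\<phi> = thin_hom I S S' c"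
proof (cases "S \<inter> S' = {}")
  case True
  then show ?thesis
    using rep_Hom_thin_outside[OF assms(1)] that by blast
next
  case False
  then obtain i0 where i0: "i0 \<in> S \<inter> S'" by blast
  have "\<phi> i = thin_hom I S S' (\<phi> i0 $$ (0, 0)) i" for i
  proof (cases "i \<in> S \<inter> S'")
    case True
    have "\<phi> i0 \<in> carrier_mat 1 1"
      using assms(1) i0 assms(2)[THEN subsetD, OF i0] by (auto simp: rep_Hom_def thin_dim_def)
    then have "\<phi> i0 = \<phi> i0 $$ (0, 0) \<cdot>\<^sub>m 1\<^sub>m 1" by auto
    then show ?thesis
      using True rep_Hom_thin_const[OF assms i0 True] by (simp add: thin_hom_def)
  qed (rule rep_Hom_thin_outside[OF assms(1)])
  then show ?thesis using that by blast
qed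

theorem rep_Hom_thin:
  assumes "S \<subseteq> I" "S' \<subseteq> I" "quiver_connected Q (S \<inter> S')"
  shows "rep_Hom I Q (thin_dim S) (thin_map S) (thin_dim S') (thin_map S') =
           thin_hom I S S' ` {c. c = 0 \<or> \<not> (\<exists>j\<in>S - S'. \<exists>i\<in>S \<inter> S'. Q j i) \<and>
                                       \<not> (\<exists>j\<in>S \<inter> S'. \<exists>i\<in>S' - S. Q j i)}"
    (is "?H = thin_hom I S S' ` ?C")
proof (intro equalityI subsetI)
  fix \<phi>
  assume \<phi>: "\<phi> \<in> rep_Hom I Q (thin_dim S) (thin_map S) (thin_dim S') (thin_map S')"
  moreover obtain c where "\<phi> = thin_hom I S S' c"
    using rep_Hom_thin_obtain_scalar[OF \<phi>] assms by blast
  ultimately show "\<phi> \<in> thin_hom I S S' ` ?C"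
    using thin_hom_mem_rep_Hom_iff[OF assms(1,2), of c Q] by simp
qed (use thin_hom_mem_rep_Hom_iff[OF assms(1,2)] in auto)

section \<open>Chords and triangulations of a convex polygon\<close>

lemma crosses_iff:
  assumes "a < b"
  shows "crosses {a, b} e \<longleftrightarrow> (\<exists>c c'. e = {c, c'} \<and> a < c \<and> c < b \<and> (c' < a \<or> b < c'))"
proof
  assume "crosses {a, b} e"
  then obtain a0 b0 c c' where h: "{a, b} = {a0, b0}" "e = {c, c'}" "a0 < c" "c < b0" "c' < a0 \<or> b0 < c'"
    unfolding crosses_def by blast
  then have "a0 = a \<and> b0 = b" using assms by (auto simp: doubleton_eq_iff)
  then show "\<exists>c c'. e = {c, c'} \<and> a < c \<and> c < b \<and> (c' < a \<or> b < c')" using h by blast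
qed (auto simp: crosses_def)

lemma crossesI: "a < c \<Longrightarrow> c < b \<Longrightarrow> c' < a \<or> b < c' \<Longrightarrow> crosses {a, b} {c, c'}"
  unfolding crosses_def by blast

lemma crosses_sym:
  assumes "crosses d e"
  shows "crosses e d"
proof -
  obtain a b c c' where h: "d = {a, b}" "e = {c, c'}" "a < c" "c < b" "c' < a \<or> b < c'"
    using assms unfolding crosses_def by blast
  then consider "c' < a" | "b < c'" by blast
  then show ?thesis
  proof cases
    case 1
    then have "crosses {c', c} {a, b}" using h by (intro crossesI) auto
    then show ?thesis using h by (simp add: insert_commute)
  next
    case 2
    then have "crosses {c, c'} {b, a}" using h by (intro crossesI) auto
    then show ?thesis using h by (simp add: insert_commute)
  qed
qed

lemma crosses_intermediate:
  assumes "crosses {p, q} g" "crosses {r, s} g" "p \<le> r" "r < s" "s \<le> q"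
    and "p \<le> u" "u \<le> r" "s \<le> v" "v \<le> q"
  shows "crosses {u, v} g"
proof -
  obtain c c' where c: "g = {c, c'}" "r < c" "c < s" "c' < r \<or> s < c'"
    using assms crosses_iff[of r s g] by auto
  obtain d d' where d: "g = {d, d'}" "p < d" "d < q" "d' < p \<or> q < d'"
    using assms crosses_iff[of p q g] by auto
  have "c' < p \<or> q < c'" using c d assms by (auto simp: doubleton_eq_iff)
  then show ?thesis using c assms crossesI[of u c v c'] by auto
qed

lemma crosses_separated:
  assumes "crosses {p, q} g" "crosses {r, s} g" "p < q" "q \<le> r" "r < s"
    and "u \<le> p" "q \<le> w" "w \<le> r" "s \<le> v"
  shows "crosses {u, w} g \<and> crosses {w, v} g"
proof -
  obtain c c' where c: "g = {c, c'}" "p < c" "c < q" "c' < p \<or> q < c'"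
    using assms crosses_iff[of p q g] by auto
  obtain d d' where d: "g = {d, d'}" "r < d" "d < s" "d' < r \<or> s < d'"
    using assms crosses_iff[of r s g] by auto
  have "g = {c, d}" "r < d" "d < s" using c d assms by (auto simp: doubleton_eq_iff)
  then show ?thesis
    using c assms crossesI[of u c w d] crossesI[of w d v c] by (auto simp: insert_commute)
qed

lemma non_crossing_cases:
  assumes "p < q" "r < s" "\<not> crosses {p, q} {r, s}" "\<not> crosses {r, s} {p, q}"
  shows "p \<le> r \<and> s \<le> q \<or> r \<le> p \<and> q \<le> s \<or> q \<le> r \<or> s \<le> p"
  using assms crossesI[of p r q s] crossesI[of r p s q] by fastforce

lemma triangulation_diag:
  assumes "triangulation N T" "d \<in> T"
  obtains a b where "d = {a, b}" "a + 2 \<le> b" "b < N"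
proof -
  have "is_diag N d" using assms unfolding triangulation_def by blast
  then show ?thesis using that unfolding is_diag_def by blast
qed

lemma triangulation_diag_bounds:
  assumes "triangulation N T" "{a, b} \<in> T" "a < b"
  shows "a + 2 \<le> b" "b < N"
proof -
  obtain a' b' where "{a, b} = {a', b'}" "a' + 2 \<le> b'" "b' < N"
    using triangulation_diag[OF assms(1,2)] by metis
  moreover have "a' = a \<and> b' = b" using calculation \<open>a < b\<close> by (auto simp: doubleton_eq_iff)
  ultimately show "a + 2 \<le> b" "b < N" by auto
qed

lemma triangulation_subset: "triangulation N T \<Longrightarrow> d \<in> T \<Longrightarrow> d \<subseteq> {..<N}"
  by (elim triangulation_diag) auto

lemma triangulation_not_crosses: "triangulation N T \<Longrightarrow> d \<in> T \<Longrightarrow> e \<in> T \<Longrightarrow> \<not> crosses d e"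
  unfolding triangulation_def by blast

lemma triangulation_maximal:
  "triangulation N T \<Longrightarrow> is_diag N d \<Longrightarrow> d \<notin> T \<Longrightarrow> \<exists>e\<in>T. crosses d e"
  unfolding triangulation_def by blast

definition tri_side :: "nat \<Rightarrow> nat set set \<Rightarrow> nat set \<Rightarrow> bool" where
  "tri_side N T e \<longleftrightarrow> e \<in> T \<or> poly_edge N e"

lemma tri_side_succ: "p + 1 < N \<Longrightarrow> tri_side N T {p, p + 1}"
  unfolding tri_side_def poly_edge_def by auto

lemma tri_side_outer: "2 \<le> N \<Longrightarrow> tri_side N T {0, N - 1}"
  unfolding tri_side_def poly_edge_def by (intro disjI2 exI[of _ 0] exI[of _ "N - 1"]) auto

lemma tri_side_less:
  assumes "triangulation N T" "tri_side N T {p, q}" "p < q"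
  shows "q < N"
  using assms(2) triangulation_diag_bounds(2)[OF assms(1) _ assms(3)]
  unfolding tri_side_def poly_edge_def by (auto simp: doubleton_eq_iff)

lemma tri_side_mem: "tri_side N T {p, q} \<Longrightarrow> p + 2 \<le> q \<Longrightarrow> 0 < p \<or> q + 1 < N \<Longrightarrow> {p, q} \<in> T"
  unfolding tri_side_def poly_edge_def by (auto simp: doubleton_eq_iff)

lemma poly_edge_not_crosses:
  assumes "poly_edge N e" "e' \<subseteq> {..<N}"
  shows "\<not> crosses e e'"
proof
  assume "crosses e e'"
  moreover obtain a b where ab: "e = {a, b}" "a < b" "b < N" "b = a + 1 \<or> a = 0 \<and> b = N - 1"
    using assms(1) unfolding poly_edge_def by blast
  ultimately obtain c c' where "e' = {c, c'}" "a < c" "c < b" "c' < a \<or> b < c'"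
    using crosses_iff[of a b e'] by auto
  moreover have "c' < N" using assms(2) \<open>e' = {c, c'}\<close> by auto
  ultimately show False using ab(4) by linarith
qed

lemma tri_side_not_crosses:
  assumes "triangulation N T" "tri_side N T e" "d \<in> T"
  shows "\<not> crosses e d" "\<not> crosses d e"
proof -
  have "\<not> crosses e d"
  proof (cases "e \<in> T")
    case True
    then show ?thesis using triangulation_not_crosses[OF assms(1) _ assms(3)] by blast
  next
    case False
    then have "poly_edge N e" using assms(2) unfolding tri_side_def by blast
    then show ?thesis using poly_edge_not_crosses triangulation_subset[OF assms(1,3)] by blast
  qed
  then show "\<not> crosses e d" "\<not> crosses d e" using crosses_sym by blast+
qed

(* A diagonal of T crossing {w, q} would have to start at p, contradicting the maximality of w. *)
lemma tri_side_maximal_apex: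
  assumes tri: "triangulation N T" and pq: "tri_side N T {p, q}" and pw: "tri_side N T {p, w}"
    and "p < w" "w < q" and max: "\<And>c. w < c \<Longrightarrow> c < q \<Longrightarrow> {p, c} \<notin> T"
  shows "tri_side N T {w, q}"
proof -
  have "q < N" using tri_side_less[OF tri pq] \<open>p < w\<close> \<open>w < q\<close> by simp
  show ?thesis
  proof (cases "w + 1 = q")
    case True
    then show ?thesis using tri_side_succ[of w N T] \<open>q < N\<close> by simp
  next
    case False
    show ?thesis
    proof (rule ccontr)
      assume "\<not> tri_side N T {w, q}"
      moreover have "is_diag N {w, q}"
        unfolding is_diag_def using False \<open>p < w\<close> \<open>w < q\<close> \<open>q < N\<close>
        by (intro exI[of _ w] exI[of _ q]) auto
      ultimately obtain e where "e \<in> T" "crosses {w, q} e"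
        using triangulation_maximal[OF tri] unfolding tri_side_def by blast
      then obtain c c' where e: "e = {c, c'}" "w < c" "c < q" "c' < w \<or> q < c'"
        using crosses_iff[of w q e] \<open>w < q\<close> by auto
      have "\<not> crosses {p, q} {c, c'}" "\<not> crosses {p, w} {c', c}"
        using tri_side_not_crosses(1)[OF tri] pq pw \<open>e \<in> T\<close> e(1) by (auto simp: insert_commute)
      moreover have "p < c" using \<open>p < w\<close> e(2) by simp
      ultimately have "\<not> (c' < p \<or> q < c')" using crossesI e(3) by blast
      then have "c' < w" using e(4) by simp
      then have "\<not> p < c'"
        using crossesI[of p c' w c] \<open>\<not> crosses {p, w} {c', c}\<close> e(2) by blast
      then have "c' = p" using \<open>\<not> (c' < p \<or> q < c')\<close> by simp
      then have "{p, c} \<in> T" using \<open>e \<in> T\<close> e(1) by (simp add: insert_commute)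
      then show False using max e(2,3) by blast
    qed
  qed
qed

lemma tri_side_apex:
  assumes tri: "triangulation N T" and pq: "tri_side N T {p, q}" and "p + 2 \<le> q"
  obtains w where "p < w" "w < q" "tri_side N T {p, w}" "tri_side N T {w, q}"
proof -
  define W where "W = {w. p < w \<and> w < q \<and> tri_side N T {p, w}}"
  have "finite W" unfolding W_def by (rule finite_subset[of _ "{..<q}"]) auto
  moreover have "p + 1 \<in> W"
    using assms tri_side_succ tri_side_less[OF tri pq] unfolding W_def by force
  ultimately have w: "Max W \<in> W" and max: "\<And>c. c \<in> W \<Longrightarrow> c \<le> Max W"
    using Max_in Max_ge by blast+
  have "{p, c} \<notin> T" if "Max W < c" "c < q" for c
  proof
    assume "{p, c} \<in> T"
    then have "c \<in> W" using w that unfolding W_def tri_side_def by auto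
    then show False using max that by fastforce
  qed
  then have "tri_side N T {Max W, q}"
    using w by (intro tri_side_maximal_apex[OF tri pq]) (auto simp: W_def)
  then show ?thesis using that w unfolding W_def by blast
qed

section \<open>Connectedness of the common support\<close>

(* (y + N - x) mod N is the position of y counted counterclockwise from x, as in arrow_def. *)
lemma mod_shift_inj:
  fixes x y z N :: nat
  assumes "x < N" "y < N" "z < N" "(y + N - x) mod N = (z + N - x) mod N"
  shows "y = z"
proof -
  have shift: "(t + N - x) mod N = (if x \<le> t then t - x else t + N - x)" if "t < N" for t
    using that assms(1) by (simp add: less_imp_diff_less mod_if)
  show ?thesis using assms shift[OF assms(2)] shift[OF assms(3)] by (auto split: if_splits)
qed

definition share_triangle :: "nat \<Rightarrow> nat set set \<Rightarrow> nat set \<Rightarrow> nat set \<Rightarrow> bool" where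
  "share_triangle N T d e \<longleftrightarrow> (\<exists>x y z. d = {x, y} \<and> e = {x, z} \<and> y \<noteq> z \<and> tri_side N T {y, z})"

lemma share_triangle_arrow:
  assumes tri: "triangulation N T" and "d \<in> T" "e \<in> T" "share_triangle N T d e"
  shows "arrow N T d e \<or> arrow N T e d"
proof -
  obtain x y z where d: "d = {x, y}" and e: "e = {x, z}" and "y \<noteq> z" and yz: "tri_side N T {y, z}"
    using \<open>share_triangle N T d e\<close> unfolding share_triangle_def by blast
  have "x < N" "y < N" "z < N" using triangulation_subset[OF tri] assms(2,3) d e by auto
  then have "(y + N - x) mod N \<noteq> (z + N - x) mod N" using mod_shift_inj \<open>y \<noteq> z\<close> by blast
  then consider "(y + N - x) mod N < (z + N - x) mod N" | "(z + N - x) mod N < (y + N - x) mod N"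
    by linarith
  then show ?thesis
  proof cases
    case 1
    then have "arrow N T e d"
      using assms(2,3) d e \<open>y \<noteq> z\<close> yz unfolding arrow_def tri_side_def by blast
    then show ?thesis ..
  next
    case 2
    moreover have "tri_side N T {z, y}" using yz by (simp add: insert_commute)
    ultimately have "arrow N T d e"
      using assms(2,3) d e \<open>y \<noteq> z\<close> unfolding arrow_def tri_side_def by blast
    then show ?thesis ..
  qed
qed

abbreviation supp_link :: "nat \<Rightarrow> nat set set \<Rightarrow> nat set \<Rightarrow> nat set \<Rightarrow> (nat set \<times> nat set) set" where
  "supp_link N T a b \<equiv> quiver_link (arrow N T) (Supp T a \<inter> Supp T b)"

lemma supp_link_share_triangle:
  assumes "triangulation N T" "d \<in> Supp T a \<inter> Supp T b" "e \<in> Supp T a \<inter> Supp T b"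
    and "share_triangle N T d e"
  shows "(d, e) \<in> supp_link N T a b"
  using share_triangle_arrow[OF assms(1) _ _ assms(4)] assms(2,3)
  unfolding quiver_link_def Supp_def by blast

lemma apex_position_nested:
  assumes tri: "triangulation N T" and pw: "tri_side N T {p, w}" and wq: "tri_side N T {w, q}"
    and "p < w" "w < q" "{r, s} \<in> T" "p \<le> r" "r < s" "s \<le> q" "{r, s} \<noteq> {p, q}"
  shows "s \<le> w \<or> w \<le> r"
proof (rule ccontr)
  assume "\<not> (s \<le> w \<or> w \<le> r)"
  then have "r < w" "w < s" by auto
  have "\<not> crosses {p, w} {r, s}" "\<not> crosses {w, q} {s, r}"
    using tri_side_not_crosses(1)[OF tri] pw wq \<open>{r, s} \<in> T\<close> by (auto simp: insert_commute)
  show False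
  proof (cases "p < r")
    case True
    then show False using crossesI[of p r w s] \<open>\<not> crosses {p, w} {r, s}\<close> \<open>r < w\<close> \<open>w < s\<close> by blast
  next
    case False
    then have "r = p" "s < q" using assms(7,9,10) by auto
    then show False using crossesI[of w s q r] \<open>\<not> crosses {w, q} {s, r}\<close> \<open>r < w\<close> \<open>w < s\<close> by blast
  qed
qed

lemma nested_share_triangle:
  assumes tri: "triangulation N T" and pq: "{p, q} \<in> T" and rs: "{r, s} \<in> T"
    and "p \<le> r" "r < s" "s \<le> q" "{r, s} \<noteq> {p, q}"
  obtains u v where "{u, v} \<in> T" "share_triangle N T {p, q} {u, v}"
    "p \<le> u" "u \<le> r" "s \<le> v" "v \<le> q" "v - u < q - p"
proof -
  have bounds: "p + 2 \<le> q" "q < N" "r + 2 \<le> s"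
    using triangulation_diag_bounds[OF tri] pq rs assms(4-6) by auto
  obtain w where w: "p < w" "w < q" "tri_side N T {p, w}" "tri_side N T {w, q}"
    using tri_side_apex[OF tri _ bounds(1)] pq unfolding tri_side_def by blast
  consider "s \<le> w" | "w \<le> r"
    using apex_position_nested[OF tri w(3,4,1,2) rs assms(4-7)] by blast
  then show ?thesis
  proof cases
    case 1
    have "{p, w} \<in> T" using tri_side_mem[OF w(3)] bounds 1 w(2) assms(4) by simp
    moreover have "share_triangle N T {p, q} {p, w}"
      unfolding share_triangle_def using w(2,4) by (auto simp: insert_commute)
    ultimately show ?thesis using that 1 w(1,2) assms(4) by simp
  next
    case 2
    have "{w, q} \<in> T" using tri_side_mem[OF w(4)] bounds 2 w(1) assms(6) by simp
    moreover have "share_triangle N T {p, q} {w, q}"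
      unfolding share_triangle_def using w(1,3) by (auto simp: insert_commute)
    ultimately show ?thesis using that 2 w(1,2) assms(6) by simp
  qed
qed

lemma supp_link_nested:
  assumes tri: "triangulation N T"
  shows "{p, q} \<in> Supp T a \<inter> Supp T b \<Longrightarrow> {r, s} \<in> Supp T a \<inter> Supp T b \<Longrightarrow>
    p \<le> r \<Longrightarrow> r < s \<Longrightarrow> s \<le> q \<Longrightarrow> ({p, q}, {r, s}) \<in> (supp_link N T a b)\<^sup>*"
proof (induction "q - p" arbitrary: p q rule: less_induct)
  case less
  show ?case
  proof (cases "{r, s} = {p, q}")
    case False
    have "{p, q} \<in> T" "{r, s} \<in> T" using less.prems(1,2) by (simp_all add: Supp_def)
    then obtain u v where uv: "{u, v} \<in> T" "share_triangle N T {p, q} {u, v}"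
      "p \<le> u" "u \<le> r" "s \<le> v" "v \<le> q" "v - u < q - p"
      using nested_share_triangle[OF tri _ _ less.prems(3-5) False] by blast
    then have "{u, v} \<in> Supp T a \<inter> Supp T b"
      using crosses_intermediate[of p q _ r s u v] less.prems by (auto simp: Supp_def)
    then have "({p, q}, {u, v}) \<in> supp_link N T a b" "({u, v}, {r, s}) \<in> (supp_link N T a b)\<^sup>*"
      using supp_link_share_triangle[OF tri less.prems(1) _ uv(2)] less.hyps[OF uv(7)]
        less.prems(2,4) uv(4,5) by blast+
    then show ?thesis by (rule converse_rtrancl_into_rtrancl)
  qed simp
qed

lemma apex_position_separated:
  assumes tri: "triangulation N T" and uw: "tri_side N T {u, w}" and wv: "tri_side N T {w, v}"
    and "{p, q} \<in> T" "{r, s} \<in> T" "u \<le> p" "p < q" "q \<le> r" "r < s" "s \<le> v"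
  shows "w \<le> p \<or> s \<le> w \<or> q \<le> w \<and> w \<le> r"
proof -
  have "\<not> crosses {p, q} {w, v}" "\<not> crosses {r, s} {w, u}"
    using tri_side_not_crosses(2)[OF tri] uw wv assms(4,5) by (auto simp: insert_commute)
  then show ?thesis using crossesI[of p w q v] crossesI[of r w s u] assms(6-10) by fastforce
qed

lemma supp_link_across_apex:
  assumes tri: "triangulation N T"
    and pq: "{p, q} \<in> Supp T a \<inter> Supp T b" and rs: "{r, s} \<in> Supp T a \<inter> Supp T b"
    and "p < q" "q \<le> r" "r < s"
    and uw: "tri_side N T {u, w}" and wv: "tri_side N T {w, v}" and uv: "tri_side N T {u, v}"
    and "u \<le> p" "q \<le> w" "w \<le> r" "s \<le> v"
  shows "({p, q}, {r, s}) \<in> (supp_link N T a b)\<^sup>*"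
proof -
  let ?U = "Supp T a \<inter> Supp T b"
  have "p + 2 \<le> q" "r + 2 \<le> s" "s < N"
    using triangulation_diag_bounds[OF tri] pq rs \<open>p < q\<close> \<open>r < s\<close> by (auto simp: Supp_def)
  then have "{u, w} \<in> T" "{w, v} \<in> T"
    using tri_side_mem[OF uw] tri_side_mem[OF wv] assms(10-13) by auto
  moreover have "crosses {u, w} g \<and> crosses {w, v} g" if "g = a \<or> g = b" for g
    using crosses_separated[of p q g r s u w v] that pq rs assms(4-6,10-13) by (auto simp: Supp_def)
  ultimately have uw': "{u, w} \<in> ?U" and wv': "{w, v} \<in> ?U" by (auto simp: Supp_def)
  have "({u, w}, {p, q}) \<in> (supp_link N T a b)\<^sup>*"
    using supp_link_nested[OF tri uw' pq] assms(4,10,11) by simp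
  then have "({p, q}, {u, w}) \<in> (supp_link N T a b)\<^sup>*"
    by (rule quiver_link_rtrancl_sym)
  moreover have "share_triangle N T {u, w} {w, v}"
    unfolding share_triangle_def using uv assms(4-6,10-13)
    by (intro exI[of _ w] exI[of _ u] exI[of _ v]) (auto simp: insert_commute)
  then have "({u, w}, {w, v}) \<in> supp_link N T a b"
    by (rule supp_link_share_triangle[OF tri uw' wv'])
  moreover have "({w, v}, {r, s}) \<in> (supp_link N T a b)\<^sup>*"
    using supp_link_nested[OF tri wv' rs] assms(6,12,13) by simp
  ultimately show ?thesis by (meson rtrancl_into_rtrancl rtrancl_trans)
qed

lemma supp_link_separated:
  assumes tri: "triangulation N T"
    and pq: "{p, q} \<in> Supp T a \<inter> Supp T b" and rs: "{r, s} \<in> Supp T a \<inter> Supp T b"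
    and "p < q" "q \<le> r" "r < s"
  shows "tri_side N T {u, v} \<Longrightarrow> u \<le> p \<Longrightarrow> s \<le> v \<Longrightarrow> ({p, q}, {r, s}) \<in> (supp_link N T a b)\<^sup>*"
proof (induction "v - u" arbitrary: u v rule: less_induct)
  case less
  have T: "{p, q} \<in> T" "{r, s} \<in> T" using pq rs by (simp_all add: Supp_def)
  have "p + 2 \<le> q" using triangulation_diag_bounds[OF tri T(1) \<open>p < q\<close>] by simp
  then have "u + 2 \<le> v" using less.prems(2,3) \<open>q \<le> r\<close> \<open>r < s\<close> by linarith
  then obtain w where w: "u < w" "w < v" "tri_side N T {u, w}" "tri_side N T {w, v}"
    by (rule tri_side_apex[OF tri less.prems(1)])
  consider "w \<le> p" | "s \<le> w" | "q \<le> w" "w \<le> r"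
    using apex_position_separated[OF tri w(3,4) T less.prems(2) \<open>p < q\<close> \<open>q \<le> r\<close> \<open>r < s\<close> less.prems(3)]
    by blast
  then show ?case
  proof cases
    case 1
    then show ?thesis using less.hyps[of v w] w less.prems(3) by auto
  next
    case 2
    then show ?thesis using less.hyps[of w u] w less.prems(2) by auto
  next
    case 3
    then show ?thesis
      using supp_link_across_apex[OF tri pq rs \<open>p < q\<close> \<open>q \<le> r\<close> \<open>r < s\<close> w(3,4) less.prems(1,2) _ _ less.prems(3)]
      by blast
  qed
qed

lemma supp_link_connected:
  assumes tri: "triangulation N T" and d: "d \<in> Supp T a \<inter> Supp T b" and e: "e \<in> Supp T a \<inter> Supp T b"
  shows "(d, e) \<in> (supp_link N T a b)\<^sup>*"
proof -
  have "d \<in> T" "e \<in> T" using d e by (simp_all add: Supp_def)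
  obtain p q where pq: "d = {p, q}" "p + 2 \<le> q" "q < N"
    using triangulation_diag[OF tri \<open>d \<in> T\<close>] by blast
  obtain r s where rs: "e = {r, s}" "r + 2 \<le> s" "s < N"
    using triangulation_diag[OF tri \<open>e \<in> T\<close>] by blast
  have "p < q" "r < s" using pq(2) rs(2) by simp_all
  have "\<not> crosses {p, q} {r, s}" "\<not> crosses {r, s} {p, q}"
    using triangulation_not_crosses[OF tri] \<open>d \<in> T\<close> \<open>e \<in> T\<close> pq(1) rs(1) by blast+
  then consider "p \<le> r" "s \<le> q" | "r \<le> p" "q \<le> s" | "q \<le> r" | "s \<le> p"
    using non_crossing_cases \<open>p < q\<close> \<open>r < s\<close> by blast
  moreover have outer: "tri_side N T {0, N - 1}" using tri_side_outer rs(2,3) by simp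
  moreover note d' = d[unfolded pq(1)] and e' = e[unfolded rs(1)]
  ultimately have "({p, q}, {r, s}) \<in> (supp_link N T a b)\<^sup>*"
  proof cases
    case 1
    then show ?thesis using supp_link_nested[OF tri d' e'] \<open>r < s\<close> by simp
  next
    case 2
    show ?thesis
      by (rule quiver_link_rtrancl_sym[OF supp_link_nested[OF tri e' d' 2(1) \<open>p < q\<close> 2(2)]])
  next
    case 3
    then show ?thesis using supp_link_separated[OF tri d' e' \<open>p < q\<close> _ \<open>r < s\<close> outer] rs(3) by simp
  next
    case 4
    then have "({r, s}, {p, q}) \<in> (supp_link N T a b)\<^sup>*"
      using supp_link_separated[OF tri e' d' \<open>r < s\<close> _ \<open>p < q\<close> outer] pq(3) by simp
    then show ?thesis by (rule quiver_link_rtrancl_sym)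
  qed
  then show ?thesis using pq(1) rs(1) by simp
qed

lemma quiver_connected_Supp_inter:
  "triangulation N T \<Longrightarrow> quiver_connected (arrow N T) (Supp T a \<inter> Supp T b)"
  unfolding quiver_connected_def using supp_link_connected by blast

section \<open>Hom spaces between the representations of positive roots\<close>

lemma HomM_eq_rep_Hom_thin:
  "HomM N T \<alpha> \<alpha>' = rep_Hom T (arrow N T) (thin_dim (Supp T \<alpha>)) (thin_map (Supp T \<alpha>))
     (thin_dim (Supp T \<alpha>')) (thin_map (Supp T \<alpha>'))"
proof -
  have "M_dim T \<beta> = thin_dim (Supp T \<beta>)" "M_map T \<beta> = thin_map (Supp T \<beta>)" for \<beta>
    by (simp_all add: fun_eq_iff M_dim_def thin_dim_def M_map_def thin_map_def)
  then show ?thesis by (simp add: HomM_def)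
qed

lemma HomM_zero_eq: "HomM_zero T \<alpha> \<alpha>' = rep_Hom_zero T (thin_dim (Supp T \<alpha>)) (thin_dim (Supp T \<alpha>'))"
proof -
  have "M_dim T \<beta> = thin_dim (Supp T \<beta>)" for \<beta>
    by (simp add: fun_eq_iff M_dim_def thin_dim_def)
  then show ?thesis by (simp add: HomM_zero_def)
qed

theorem mainTheorem12:
  fixes n :: nat and T :: "nat set set" and \<alpha> \<alpha>' :: "nat set"
  assumes "triangulation (n + 3) T"
    and "positive_root (n + 3) T \<alpha>"
    and "positive_root (n + 3) T \<alpha>'"
  defines "S \<equiv> Supp T \<alpha>" and "S' \<equiv> Supp T \<alpha>'"
  shows "(HomM (n + 3) T \<alpha> \<alpha>' \<noteq> {HomM_zero T \<alpha> \<alpha>'} \<longleftrightarrow>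
            S \<inter> S' \<noteq> {} \<and>
            \<not> (\<exists>j\<in>S - S'. \<exists>i\<in>S \<inter> S'. arrow (n + 3) T j i) \<and>
            \<not> (\<exists>j\<in>S \<inter> S'. \<exists>i\<in>S' - S. arrow (n + 3) T j i))
       \<and> (HomM (n + 3) T \<alpha> \<alpha>' \<noteq> {HomM_zero T \<alpha> \<alpha>'} \<longrightarrow>
            one_dimensional (HomM (n + 3) T \<alpha> \<alpha>') (HomM_zero T \<alpha> \<alpha>'))"
proof -
  define good where "good \<longleftrightarrow> \<not> (\<exists>j\<in>S - S'. \<exists>i\<in>S \<inter> S'. arrow (n + 3) T j i) \<and>
                             \<not> (\<exists>j\<in>S \<inter> S'. \<exists>i\<in>S' - S. arrow (n + 3) T j i)"
  let ?H = "HomM (n + 3) T \<alpha> \<alpha>'" and ?Z = "HomM_zero T \<alpha> \<alpha>'" and ?\<psi> = "thin_hom T S S' 1"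
  have sub: "S \<subseteq> T" "S' \<subseteq> T" unfolding S_def S'_def Supp_def by auto
  have "quiver_connected (arrow (n + 3) T) (S \<inter> S')"
    unfolding S_def S'_def by (rule quiver_connected_Supp_inter[OF assms(1)])
  then have H: "?H = thin_hom T S S' ` {c. c = 0 \<or> good}"
    using rep_Hom_thin[OF sub] unfolding HomM_eq_rep_Hom_thin good_def by (simp add: S_def S'_def)
  have zero_iff: "thin_hom T S S' c = ?Z \<longleftrightarrow> c = 0 \<or> S \<inter> S' = {}" for c
    using thin_hom_eq_zero_iff[of S S' T c] sub unfolding HomM_zero_eq S_def S'_def by blast
  show ?thesis
  proof (cases "S \<inter> S' \<noteq> {} \<and> good")
    case True
    then have "?H = range (thin_hom T S S')" using H by auto
    also have "\<dots> = range (\<lambda>c i. c \<cdot>\<^sub>m ?\<psi> i)" by (intro image_cong refl thin_hom_smult)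
    finally have "?H = {(\<lambda>i. c \<cdot>\<^sub>m ?\<psi> i) | c. True}" by blast
    moreover have "?\<psi> \<in> ?H" "?\<psi> \<noteq> ?Z" using H True zero_iff by auto
    ultimately have "?H \<noteq> {?Z}" "one_dimensional ?H ?Z"
      unfolding one_dimensional_def by blast+
    with True show ?thesis unfolding good_def by blast
  next
    case False
    then have "thin_hom T S S' c = ?Z" if "c = 0 \<or> good" for c using that zero_iff by blast
    then have "?H = {?Z}" unfolding H by (auto intro!: image_eqI[where x = 0])
    with False show ?thesis unfolding good_def by blast
  qed
qed

end
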